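(* Let $\mathbb{F}$ be a field of characteristic $p$ ($p=0$ or prime) and let $f\in\mathbb{F}[X]$ have degree at least $2$. Suppose $f$ is not a monomial and is not a binomial of the form $aX^{p^{\ell}}+b$ with $a\in\mathbb{F}\setminus\{0\}$, $b\in\mathbb{F}$, $\ell\ge1$ (the latter exclusion only relevant when $p>0$). Then $f^{(k)}$ is not a monomial for any $k\ge1$.
   Context: Iterates: $f^{(0)}=X$, $f^{(k)}=f\circ f^{(k-1)}$. A monomial means a polynomial of the form $cX^m$ with $c\in\mathbb{F}$. *)

theory Defs
  imports "HOL-Computational_Algebra.Polynomial"
begin

definition poly_iter :: "'a::comm_semiring_1 poly \<Rightarrow> nat \<Rightarrow> 'a poly" where
  "poly_iter f k = ((\<lambda>g. pcompose f g) ^^ k) [:0, 1:]"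

definition is_monomial :: "'a::zero poly \<Rightarrow> bool" where
  "is_monomial g \<longleftrightarrow> (\<exists>c m. g = monom c m)"

end

theory Submission
  imports Defs "HOL-Computational_Algebra.Primes"
begin

text \<open>If a composition \<open>h \<circ> g\<close> of non-constant polynomials is a monomial, then \<open>g\<close> has the
  shape \<open>\<beta> X^j + b\<close>: after moving \<open>g\<close> to vanish at \<open>0\<close> and writing both factors as \<open>X\<^sup>n\<close> times a
  polynomial not vanishing at \<open>0\<close>, the composition can only be a monomial if these
  cofactors are constants.
  Applying this to \<open>f^(k) = f^(k-1) \<circ> f = f \<circ> f^(k-1)\<close> forces \<open>f = \<beta> X^d + b\<close> with
  \<open>b \<noteq> 0\<close> and \<open>f^(k-1) = \<alpha> X^s + r\<close>. Then \<open>\<beta> (\<alpha> X + r)^d + b\<close> must itself be a monomial,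
  so \<open>r \<noteq> 0\<close> and all binomial coefficients \<open>d choose i\<close>, \<open>0 < i < d\<close>, vanish in the field,
  which happens only when \<open>d\<close> is a power of the characteristic.\<close>

lemma pcompose_power: "pcompose (p ^ n) q = pcompose p q ^ n"
  for p q :: "'a::comm_semiring_1 poly"
  by (induction n) (simp_all add: pcompose_mult pcompose_1)

lemma pcompose_monom: "pcompose (monom c n) q = smult c (q ^ n)"
  for q :: "'a::comm_semiring_1 poly"
  by (simp add: monom_altdef pcompose_smult pcompose_power pcompose_pCons)

lemma pcompose_right_cancel:
  fixes p q r :: "'a::idom poly"
  assumes "pcompose p r = pcompose q r" and "degree r > 0"
  shows "p = q"
  using assms pcompose_eq_0[of "p - q" r] by (simp add: pcompose_diff)

lemma monom_mult_decomp:
  fixes p :: "'a::idom poly"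
  assumes "p \<noteq> 0"
  obtains u where "p = monom 1 (order 0 p) * u" and "poly u 0 \<noteq> 0"
proof -
  obtain u where "p = [:0, 1:] ^ order 0 p * u" and "\<not> [:0, 1:] dvd u"
    using order_decomp[OF assms, of 0] by auto
  then show thesis
    using that poly_eq_0_iff_dvd[of u 0] by (simp add: monom_altdef)
qed

lemma monom_mult_eq_monom_imp_const:
  fixes w :: "'a::idom poly"
  assumes eq: "monom 1 n * w = monom c m" and w0: "poly w 0 \<noteq> 0"
  shows "w = [:c:]"
proof -
  have "coeff (monom c m) n = poly w 0"
    by (simp flip: eq add: coeff_monom_mult poly_0_coeff_0)
  with w0 have "n = m"
    by (simp add: coeff_monom split: if_splits)
  with eq have "monom 1 n * w = monom 1 n * [:c:]"
    by (simp add: smult_monom)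
  then show ?thesis
    by (metis mult_left_cancel monom_eq_0_iff one_neq_zero)
qed

lemma pcompose_eq_monom_imp_monom:
  fixes H G :: "'a::idom poly"
  assumes dH: "degree H \<ge> 1" and dG: "degree G \<ge> 1" and G0: "poly G 0 = 0"
    and HG: "pcompose H G = monom c m"
  shows "\<exists>\<beta>. \<beta> \<noteq> 0 \<and> G = monom \<beta> (degree G)"
proof -
  define e where "e = order 0 H"
  define j where "j = order 0 G"
  have "H \<noteq> 0" and "G \<noteq> 0"
    using dH dG by auto
  obtain K where HK: "H = monom 1 e * K" and K0: "poly K 0 \<noteq> 0"
    using monom_mult_decomp[OF \<open>H \<noteq> 0\<close>] unfolding e_def .
  obtain u where Gu: "G = monom 1 j * u" and u0: "poly u 0 \<noteq> 0"
    using monom_mult_decomp[OF \<open>G \<noteq> 0\<close>] unfolding j_def .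
  \<comment> \<open>\<open>w\<close> does not vanish at \<open>0\<close>, so it must be the constant \<open>c\<close>; its degree then kills \<open>K\<close> and \<open>u\<close>.\<close>
  define w where "w = u ^ e * pcompose K G"
  have "pcompose H G = G ^ e * pcompose K G"
    by (simp add: HK pcompose_mult pcompose_monom)
  also have "\<dots> = monom 1 (j * e) * w"
    by (simp add: Gu w_def power_mult_distrib monom_power mult_ac)
  finally have "monom 1 (j * e) * w = monom c m"
    using HG by simp
  moreover have "poly w 0 \<noteq> 0"
    using u0 K0 G0 by (simp add: w_def poly_pcompose)
  ultimately have "w = [:c:]"
    by (rule monom_mult_eq_monom_imp_const)
  moreover have "pcompose K G \<noteq> 0" and "u \<noteq> 0"
    using K0 G0 u0 by (metis poly_0 poly_pcompose)+
  then have "degree w = e * degree u + degree K * degree G"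
    by (simp add: w_def degree_mult_eq degree_power_eq degree_pcompose)
  ultimately have deg_w: "e * degree u + degree K * degree G = 0"
    by simp
  have "K \<noteq> 0"
    using K0 by auto
  then have "degree H = e + degree K"
    by (simp add: HK degree_mult_eq degree_monom_eq)
  with deg_w dH dG have "degree u = 0"
    by auto
  then obtain \<beta> where "u = [:\<beta>:]"
    by (metis degree_eq_zeroE)
  with Gu u0 show ?thesis
    by (auto simp: smult_monom degree_monom_eq)
qed

lemma pcompose_eq_monom_imp_binomial:
  fixes h g :: "'a::idom poly"
  assumes "degree h \<ge> 1" and "degree g \<ge> 1" and "pcompose h g = monom c m"
  shows "\<exists>\<beta> b. \<beta> \<noteq> 0 \<and> g = monom \<beta> (degree g) + [:b:]"
proof -
  define b where "b = coeff g 0"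
  define G where "G = g - [:b:]"
  have "degree [:-b:] < degree g"
    using assms(2) by simp
  moreover have "G = g + [:-b:]"
    by (simp add: G_def)
  ultimately have deg_G: "degree G = degree g"
    by (simp add: degree_add_eq_left)
  have "g = pcompose [:b, 1:] G"
    by (simp add: pcompose_pCons G_def)
  with assms(3) have "pcompose (pcompose h [:b, 1:]) G = monom c m"
    by (simp add: pcompose_assoc)
  moreover have "degree (pcompose h [:b, 1:]) = degree h"
    by (simp add: degree_pcompose)
  moreover have "poly G 0 = 0"
    by (simp add: G_def b_def poly_0_coeff_0)
  ultimately obtain \<beta> where "\<beta> \<noteq> 0" and "G = monom \<beta> (degree g)"
    using pcompose_eq_monom_imp_monom assms(1,2) deg_G by metis
  then have "g = monom \<beta> (degree g) + [:b:]"
    by (simp add: G_def algebra_simps)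
  with \<open>\<beta> \<noteq> 0\<close> show ?thesis
    by blast
qed

lemma one_plus_X_power_eq_iff:
  assumes "d \<ge> 1"
  shows "([:1, 1:] :: 'a::comm_ring_1 poly) ^ d = monom 1 d + 1 \<longleftrightarrow>
     (\<forall>i. 0 < i \<and> i < d \<longrightarrow> of_nat (d choose i) = (0::'a))"
proof
  assume eq: "([:1, 1:] :: 'a poly) ^ d = monom 1 d + 1"
  show "\<forall>i. 0 < i \<and> i < d \<longrightarrow> of_nat (d choose i) = (0::'a)"
  proof (intro allI impI)
    fix i assume i: "0 < i \<and> i < d"
    have "of_nat (d choose i) = coeff (([:1, 1:] :: 'a poly) ^ d) i"
      using i by (simp add: coeff_linear_poly_power)
    with i show "of_nat (d choose i) = (0::'a)"
      by (simp add: eq coeff_monom coeff_1)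
  qed
next
  assume vanish: "\<forall>i. 0 < i \<and> i < d \<longrightarrow> of_nat (d choose i) = (0::'a)"
  show "([:1, 1:] :: 'a poly) ^ d = monom 1 d + 1"
  proof (rule poly_eqI)
    fix i
    show "coeff ([:1, 1:] ^ d) i = coeff (monom 1 d + 1 :: 'a poly) i"
    proof (cases "i \<le> d")
      case True
      with vanish assms show ?thesis
        by (cases "i = 0"; cases "i = d") (auto simp: coeff_linear_poly_power coeff_monom coeff_1)
    next
      case False
      then show ?thesis
        by (simp add: coeff_eq_0 coeff_monom coeff_1 degree_linear_power)
    qed
  qed
qed

lemma binomials_vanish_imp_CHAR_power:
  assumes "d \<ge> 2" and "\<forall>i. 0 < i \<and> i < d \<longrightarrow> of_nat (d choose i) = (0::'a::field)"
  shows "CHAR('a) > 0 \<and> (\<exists>l\<ge>1. d = CHAR('a) ^ l)"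
  using assms
proof (induction d rule: less_induct)
  case (less d)
  define p where "p = CHAR('a)"
  have "of_nat (d choose 1) = (0::'a)"
    using less.prems by auto
  then have "p dvd d"
    by (simp add: of_nat_eq_0_iff_char_dvd p_def)
  then obtain e where de: "d = p * e" ..
  with less.prems(1) have "p > 0" and "e \<ge> 1"
    by (auto intro!: gr0I simp: Suc_le_eq)
  then have p2: "p \<ge> 2"
    using prime_CHAR_semidom prime_ge_2_nat unfolding p_def by blast
  show ?case
  proof (cases "e = 1")
    case True
    with de \<open>p > 0\<close> show ?thesis
      unfolding p_def by (intro conjI exI[of _ 1]) auto
  next
    case False
    with \<open>e \<ge> 1\<close> have e2: "e \<ge> 2" and "e < d"
      using de p2 by auto
    have "\<forall>i. 0 < i \<and> i < p \<longrightarrow> of_nat (p choose i) = (0::'a)"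
      using dvd_choose_prime prime_CHAR_semidom[OF \<open>p > 0\<close>[unfolded p_def]]
      by (auto simp: of_nat_eq_0_iff_char_dvd p_def)
    with p2 have Xp: "([:1, 1:] :: 'a poly) ^ p = monom 1 p + 1"
      by (subst one_plus_X_power_eq_iff) auto
    \<comment> \<open>Frobenius for \<open>p\<close> transfers the property from \<open>d = p e\<close> down to \<open>e\<close>.\<close>
    have "pcompose ([:1, 1:] ^ e) (monom 1 p) = (monom 1 p + 1 :: 'a poly) ^ e"
      by (simp add: pcompose_power pcompose_pCons pcompose_1 add.commute flip: one_pCons)
    also have "\<dots> = [:1, 1:] ^ d"
      by (simp only: de power_mult Xp)
    also have "\<dots> = monom 1 d + 1"
      using less.prems by (subst one_plus_X_power_eq_iff) auto
    also have "\<dots> = pcompose (monom 1 e + 1) (monom 1 p)"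
      by (simp add: de pcompose_add pcompose_monom monom_power mult.commute pcompose_1)
    finally have "([:1, 1:] :: 'a poly) ^ e = monom 1 e + 1"
      by (rule pcompose_right_cancel) (use p2 in \<open>simp add: degree_monom_eq\<close>)
    then have "\<forall>i. 0 < i \<and> i < e \<longrightarrow> of_nat (e choose i) = (0::'a)"
      using one_plus_X_power_eq_iff[OF \<open>e \<ge> 1\<close>] by blast
    from less.IH[OF \<open>e < d\<close> e2 this] obtain l where "l \<ge> 1" "e = p ^ l"
      unfolding p_def by blast
    with de \<open>p > 0\<close> show ?thesis
      unfolding p_def by (intro conjI exI[of _ "Suc l"]) auto
  qed
qed

lemma pcompose_binomials_eq_monom_imp_CHAR_power:
  fixes \<beta> \<alpha> b r c :: "'a::field"
  assumes \<beta>: "\<beta> \<noteq> 0" and \<alpha>: "\<alpha> \<noteq> 0" and s: "s \<ge> 1" and d: "d \<ge> 2" and b: "b \<noteq> 0"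
    and eq: "pcompose (monom \<beta> d + [:b:]) (monom \<alpha> s + [:r:]) = monom c m"
  shows "CHAR('a) > 0 \<and> (\<exists>l\<ge>1. d = CHAR('a) ^ l)"
proof -
  have "degree (pcompose (monom \<beta> d + [:b:]) (monom \<alpha> s + [:r:])) = d * s"
    using \<beta> \<alpha> d s by (simp add: degree_pcompose degree_add_eq_left degree_monom_eq)
  then have "degree (monom c m) = d * s"
    unfolding eq .
  with d s have "m = s * d"
    by (cases "c = 0") (auto simp: degree_monom_eq)
  define Q where "Q = smult \<beta> ([:r, \<alpha>:] ^ d) + [:b:]"
  \<comment> \<open>Pull \<open>X^s\<close> out of the inner binomial, then cancel it.\<close>
  have Q_pcompose: "pcompose (monom \<beta> d + [:b:]) [:r, \<alpha>:] = Q"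
    by (simp add: Q_def pcompose_add pcompose_monom)
  have inner: "monom \<alpha> s + [:r:] = pcompose [:r, \<alpha>:] (monom 1 s)"
    by (simp add: pcompose_pCons smult_monom)
  have "pcompose Q (monom 1 s) = monom c m"
    using eq unfolding inner pcompose_assoc Q_pcompose .
  also have "\<dots> = pcompose (monom c d) (monom 1 s)"
    by (simp add: pcompose_monom monom_power \<open>m = s * d\<close> smult_monom)
  finally have Q: "Q = monom c d"
    by (rule pcompose_right_cancel) (use s in \<open>simp add: degree_monom_eq\<close>)
  have "\<beta> * r ^ d + b = coeff Q 0"
    by (simp add: Q_def coeff_linear_poly_power)
  with Q d have "\<beta> * r ^ d + b = 0"
    by (simp add: coeff_monom)
  with b d have "r \<noteq> 0"
    by (auto simp: power_0_left)
  have "\<forall>i. 0 < i \<and> i < d \<longrightarrow> of_nat (d choose i) = (0::'a)"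
  proof (intro allI impI)
    fix i assume i: "0 < i \<and> i < d"
    have "\<beta> * (of_nat (d choose i) * \<alpha> ^ i * r ^ (d - i)) = coeff Q i"
      using i by (simp add: Q_def coeff_linear_poly_power coeff_pCons split: nat.split)
    with Q i \<alpha> \<beta> \<open>r \<noteq> 0\<close> show "of_nat (d choose i) = (0::'a)"
      by (simp add: coeff_monom)
  qed
  with d show ?thesis
    by (rule binomials_vanish_imp_CHAR_power)
qed

lemma poly_iter_Suc: "poly_iter f (Suc k) = pcompose f (poly_iter f k)"
  by (simp add: poly_iter_def)

lemma poly_iter_0: "poly_iter f 0 = [:0, 1:]"
  by (simp add: poly_iter_def)

lemma poly_iter_Suc_right: "poly_iter f (Suc k) = pcompose (poly_iter f k) f"
  for f :: "'a::comm_semiring_1 poly"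
proof (induction k)
  case 0
  show ?case
    by (simp add: poly_iter_Suc poly_iter_0 pcompose_pCons)
next
  case (Suc k)
  then show ?case
    by (metis poly_iter_Suc pcompose_assoc)
qed

lemma degree_poly_iter: "degree (poly_iter f k) = degree f ^ k"
  for f :: "'a::idom poly"
  by (induction k) (simp_all add: poly_iter_0 poly_iter_Suc degree_pcompose)

lemma pcompose_eq_monom_both_ways_imp_CHAR_binomial:
  fixes f P :: "'a::field poly"
  assumes "degree f \<ge> 2" and "degree P \<ge> 1" and "\<not> is_monomial f"
    and outer: "pcompose P f = monom c' m'" and inner: "pcompose f P = monom c m"
  shows "\<exists>a b l. CHAR('a) > 0 \<and> a \<noteq> 0 \<and> l \<ge> 1 \<and> f = monom a (CHAR('a) ^ l) + [:b:]"
proof -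
  define d where "d = degree f"
  define s where "s = degree P"
  have "d \<ge> 2" and "s \<ge> 1" and "degree f \<ge> 1"
    using assms(1,2) by (simp_all add: d_def s_def)
  with outer obtain \<beta> b where \<beta>: "\<beta> \<noteq> 0" and f: "f = monom \<beta> d + [:b:]"
    unfolding d_def s_def by (blast dest: pcompose_eq_monom_imp_binomial)
  from inner \<open>degree f \<ge> 1\<close> \<open>s \<ge> 1\<close> obtain \<alpha> r where \<alpha>: "\<alpha> \<noteq> 0" and P: "P = monom \<alpha> s + [:r:]"
    unfolding s_def by (blast dest: pcompose_eq_monom_imp_binomial)
  have "b \<noteq> 0"
  proof
    assume "b = 0"
    with f have "f = monom \<beta> d"
      by simp
    with assms(3) show False
      unfolding is_monomial_def by blast
  qed
  have "pcompose (monom \<beta> d + [:b:]) (monom \<alpha> s + [:r:]) = monom c m"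
    using inner unfolding f P .
  then have "CHAR('a) > 0 \<and> (\<exists>l\<ge>1. d = CHAR('a) ^ l)"
    by (rule pcompose_binomials_eq_monom_imp_CHAR_power[OF \<beta> \<alpha> \<open>s \<ge> 1\<close> \<open>d \<ge> 2\<close> \<open>b \<noteq> 0\<close>])
  with f \<beta> show ?thesis
    by blast
qed

theorem lemma10:
  fixes f :: "'a::field poly"
  assumes "degree f \<ge> 2"
    and "\<not> is_monomial f"
    and "\<not> (\<exists>a b l. CHAR('a) > 0 \<and> a \<noteq> 0 \<and> l \<ge> 1 \<and>
                 f = monom a (CHAR('a) ^ l) + [:b:])"
  shows "\<forall>k\<ge>1. \<not> is_monomial (poly_iter f k)"
proof (intro allI impI notI)
  fix k :: nat assume "k \<ge> 1" and "is_monomial (poly_iter f k)"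
  then obtain c m where iter: "poly_iter f k = monom c m"
    unfolding is_monomial_def by blast
  have "k \<noteq> 1"
  proof
    assume "k = 1"
    with iter have "f = monom c m"
      by (simp add: poly_iter_Suc poly_iter_0)
    with assms(2) show False
      unfolding is_monomial_def by blast
  qed
  with \<open>k \<ge> 1\<close> obtain j where k: "k = Suc j" and "j \<ge> 1"
    by (cases k) auto
  have "degree (poly_iter f j) \<ge> 1"
    using assms(1) \<open>j \<ge> 1\<close> by (simp add: degree_poly_iter)
  moreover have "pcompose (poly_iter f j) f = monom c m"
    using iter by (simp add: k poly_iter_Suc_right)
  moreover have "pcompose f (poly_iter f j) = monom c m"
    using iter by (simp add: k poly_iter_Suc)
  ultimately show False
    using pcompose_eq_monom_both_ways_imp_CHAR_binomial assms by blast
qed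

end
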